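(* Every non-strictly slope-disjoint straight-line drawing of a rooted tree is monotone and planar.
   Context: All tree edges are directed away from the root; $T_u$ is the subtree rooted at $u$. The slope of a directed edge $(u,v)$ is the angle (mod $2\pi$) of the counter-clockwise rotation taking the horizontal half-line from $u$ towards increasing $x$ onto the half-line from $u$ through $v$. A drawing is non-strictly slope-disjoint if to every vertex $u$ one can assign angles $0\le a_1(u)<a_2(u)\le\pi$ such that: (1) every edge $e$ of $T_u$ and the edge entering $u$ from its parent satisfies $a_1(u)<slope(e)<a_2(u)$; (2) for every vertex $u$ and child $v$: $a_1(u)\le a_1(v)<a_2(v)\le a_2(u)$; (3) for two distinct children $v_1,v_2$ of the same vertex: either $a_1(v_1)<a_2(v_1)\le a_1(v_2)<a_2(v_2)$ or $a_1(v_2)<a_2(v_2)\le a_1(v_1)<a_2(v_1)$. A path $p_0,\dots,p_k$ in a straight-line drawing is monotone if there is a line $\ell$ such that the orthogonal projections of $p_0,\dots,p_k$ onto $\ell$ appear along $\ell$ in this order. A straight-line drawing of a graph is monotone if every pair of vertices is connected by a monotone path; it is planar if no two edges cross. *)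

theory Defs
  imports "HOL-Analysis.Analysis"
begin

definition rooted_tree :: "'v set \<Rightarrow> ('v \<times> 'v) set \<Rightarrow> 'v \<Rightarrow> bool" where
  "rooted_tree V E r \<longleftrightarrow> finite V \<and> r \<in> V \<and> E \<subseteq> V \<times> V \<and>
     (\<forall>u. (u, r) \<notin> E) \<and> (\<forall>v\<in>V - {r}. \<exists>!u. (u, v) \<in> E) \<and>
     (\<forall>v\<in>V. (r, v) \<in> E\<^sup>*)"

definition straight_line_drawing :: "'v set \<Rightarrow> ('v \<Rightarrow> complex) \<Rightarrow> bool" where
  "straight_line_drawing V p \<longleftrightarrow> inj_on p V"

definition slope :: "complex \<Rightarrow> complex \<Rightarrow> real" where
  "slope a b = (THE \<theta>. 0 \<le> \<theta> \<and> \<theta> < 2 * pi \<and> b - a = complex_of_real (cmod (b - a)) * cis \<theta>)"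

definition nonstrictly_slope_disjoint ::
    "'v set \<Rightarrow> ('v \<times> 'v) set \<Rightarrow> 'v \<Rightarrow> ('v \<Rightarrow> complex) \<Rightarrow> bool" where
  "nonstrictly_slope_disjoint V E r p \<longleftrightarrow>
     (\<exists>a1 a2 :: 'v \<Rightarrow> real.
        (\<forall>u\<in>V. 0 \<le> a1 u \<and> a1 u < a2 u \<and> a2 u \<le> pi) \<and>
        (\<forall>u\<in>V. \<forall>x y. (x, y) \<in> E \<and> ((u, x) \<in> E\<^sup>* \<or> y = u) \<longrightarrow>
              a1 u < slope (p x) (p y) \<and> slope (p x) (p y) < a2 u) \<and>
        (\<forall>u v. (u, v) \<in> E \<longrightarrow> a1 u \<le> a1 v \<and> a1 v < a2 v \<and> a2 v \<le> a2 u) \<and>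
        (\<forall>u v1 v2. (u, v1) \<in> E \<and> (u, v2) \<in> E \<and> v1 \<noteq> v2 \<longrightarrow>
              (a1 v1 < a2 v1 \<and> a2 v1 \<le> a1 v2 \<and> a1 v2 < a2 v2) \<or>
              (a1 v2 < a2 v2 \<and> a2 v2 \<le> a1 v1 \<and> a1 v1 < a2 v1)))"

definition is_path :: "('v \<times> 'v) set \<Rightarrow> 'v list \<Rightarrow> 'v \<Rightarrow> 'v \<Rightarrow> bool" where
  "is_path E ps x y \<longleftrightarrow> ps \<noteq> [] \<and> hd ps = x \<and> last ps = y \<and>
     (\<forall>i. Suc i < length ps \<longrightarrow> (ps ! i, ps ! Suc i) \<in> E \<or> (ps ! Suc i, ps ! i) \<in> E)"

definition monotone_path :: "('v \<Rightarrow> complex) \<Rightarrow> 'v list \<Rightarrow> bool" where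
  "monotone_path p ps \<longleftrightarrow> (\<exists>d::complex. d \<noteq> 0 \<and>
     (\<forall>i. Suc i < length ps \<longrightarrow> p (ps ! i) \<bullet> d < p (ps ! Suc i) \<bullet> d))"

definition monotone_drawing :: "'v set \<Rightarrow> ('v \<times> 'v) set \<Rightarrow> ('v \<Rightarrow> complex) \<Rightarrow> bool" where
  "monotone_drawing V E p \<longleftrightarrow>
     (\<forall>x\<in>V. \<forall>y\<in>V. \<exists>ps. is_path E ps x y \<and> monotone_path p ps)"

definition planar_drawing :: "('v \<times> 'v) set \<Rightarrow> ('v \<Rightarrow> complex) \<Rightarrow> bool" where
  "planar_drawing E p \<longleftrightarrow>
     (\<forall>a b c d. (a, b) \<in> E \<and> (c, d) \<in> E \<and> (a, b) \<noteq> (c, d) \<longrightarrow>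
        closed_segment (p a) (p b) \<inter> closed_segment (p c) (p d) \<subseteq> {p a, p b} \<inter> {p c, p d})"

end

theory Submission
  imports Defs
begin

text \<open>
  Every edge of the subtree \<open>T\<^sub>c\<close>, and the edge entering \<open>c\<close>, points into the open sector
  of directions \<open>(a\<^sub>1(c), a\<^sub>2(c)) \<subseteq> (0, \<pi>)\<close>. So the projection onto the normal of any
  direction outside that sector is strictly monotone along every downward path through \<open>c\<close>, and
  the sectors of two siblings are separated by such a direction. For vertices \<open>x, y\<close> let \<open>w\<close> be the
  vertex where their root paths branch: going up from \<open>x\<close> to \<open>w\<close> and down to \<open>y\<close> is monotone with
  respect to the normal of a direction separating the two branches. The same projection shows that
  edges on different branches at \<open>w\<close> can only meet at \<open>w\<close>, while two edges on a common root path are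
  separated by their height \<open>Im\<close>, which increases along every edge.
\<close>

lemma slope_eq_Arg2pi:
  assumes "a \<noteq> b"
  shows "slope a b = Arg2pi (b - a)"
  unfolding slope_def
proof (rule the_equality)
  show "0 \<le> Arg2pi (b - a) \<and> Arg2pi (b - a) < 2 * pi \<and>
      b - a = complex_of_real (cmod (b - a)) * cis (Arg2pi (b - a))"
    using Arg2pi[of "b - a"] Arg2pi_eq[of "b - a"] by (simp add: cis_conv_exp)
next
  fix \<theta> assume "0 \<le> \<theta> \<and> \<theta> < 2 * pi \<and> b - a = complex_of_real (cmod (b - a)) * cis \<theta>"
  then show "\<theta> = Arg2pi (b - a)"
    using assms by (intro Arg2pi_unique[symmetric, where r = "cmod (b - a)"]) (auto simp: cis_conv_exp)
qed

lemma inner_i_cis: "z \<bullet> (\<i> * cis \<gamma>) = cmod z * sin (Arg2pi z - \<gamma>)"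
proof -
  have "Re z = cmod z * cos (Arg2pi z)" "Im z = cmod z * sin (Arg2pi z)"
    by (simp_all add: cos_Arg2pi sin_Arg2pi)
  then show ?thesis by (simp add: inner_complex_def sin_diff algebra_simps)
qed

lemma closed_segments_separated_by_hyperplane:
  fixes A B C D q d :: "'a::real_inner"
  assumes "A \<bullet> d \<le> t" "B \<bullet> d < t" "t \<le> C \<bullet> d" "t < D \<bullet> d"
    and "q \<in> closed_segment A B" "q \<in> closed_segment C D"
  shows "q = A \<and> q = C"
proof -
  obtain s where s: "0 \<le> s" "s \<le> 1" "q = (1 - s) *\<^sub>R A + s *\<^sub>R B"
    using assms(5) by (auto simp: closed_segment_def)
  obtain u where u: "0 \<le> u" "u \<le> 1" "q = (1 - u) *\<^sub>R C + u *\<^sub>R D"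
    using assms(6) by (auto simp: closed_segment_def)
  have qs: "q \<bullet> d = (1 - s) * (A \<bullet> d) + s * (B \<bullet> d)"
    unfolding s(3) by (simp add: inner_add_left)
  have qu: "q \<bullet> d = (1 - u) * (C \<bullet> d) + u * (D \<bullet> d)"
    unfolding u(3) by (simp add: inner_add_left)
  have "q \<bullet> d \<le> (1 - s) * t + s * t"
    unfolding qs using assms(1,2) s(1,2) by (intro add_mono mult_left_mono) auto
  moreover have "q \<bullet> d < (1 - s) * t + s * t" if "0 < s"
    unfolding qs using assms(1,2) s(2) that by (intro add_le_less_mono mult_left_mono) auto
  moreover have "(1 - u) * t + u * t \<le> q \<bullet> d"
    unfolding qu using assms(3,4) u(1,2) by (intro add_mono mult_left_mono) auto
  moreover have "(1 - u) * t + u * t < q \<bullet> d" if "0 < u"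
    unfolding qu using assms(3,4) u(2) that by (intro add_le_less_mono mult_left_mono) auto
  ultimately have "\<not> 0 < s" "\<not> 0 < u"
    by (auto simp: algebra_simps)
  then have "s = 0 \<and> u = 0"
    using s(1) u(1) by simp
  then show ?thesis using s(3) u(3) by simp
qed

lemma successively_transp_hd:
  assumes "successively R (w # L)" "transp R" "v \<in> set L"
  shows "R w v"
  using assms by (simp add: successively_conv_sorted_wrt)

lemma common_prefix_split:
  "xs \<noteq> [] \<Longrightarrow> ys \<noteq> [] \<Longrightarrow> hd xs = hd ys \<Longrightarrow>
    \<exists>c w P Q. xs = c @ w # P \<and> ys = c @ w # Q \<and> (P = [] \<or> Q = [] \<or> hd P \<noteq> hd Q)"
proof (induction xs arbitrary: ys)
  case (Cons x xs)
  then obtain ys' where ys: "ys = x # ys'" by (cases ys) auto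
  show ?case
  proof (cases "xs = [] \<or> ys' = [] \<or> hd xs \<noteq> hd ys'")
    case True
    then show ?thesis using ys by (intro exI[of _ "[]"]) auto
  next
    case False
    then obtain c w P Q where "xs = c @ w # P" "ys' = c @ w # Q" "P = [] \<or> Q = [] \<or> hd P \<noteq> hd Q"
      using Cons.IH[of ys'] by auto
    then show ?thesis using ys by (intro exI[of _ "x # c"]) auto
  qed
qed simp

abbreviation directed_path :: "('v \<times> 'v) set \<Rightarrow> 'v list \<Rightarrow> bool" where
  "directed_path E \<equiv> successively (\<lambda>x y. (x, y) \<in> E)"

lemma rtrancl_imp_directed_path:
  assumes "(u, v) \<in> E\<^sup>*"
  shows "\<exists>L. directed_path E (u # L) \<and> last (u # L) = v"
  using assms
proof (induction rule: rtrancl_induct)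
  case (step y z)
  then obtain L where "directed_path E (u # L)" "last (u # L) = y" by blast
  then show ?case
    using step(2) successively_append_iff[of _ "u # L" "[z]"] by (intro exI[of _ "L @ [z]"]) auto
qed auto

lemma directed_path_reachable:
  "directed_path E (u # L) \<Longrightarrow> v \<in> set (u # L) \<Longrightarrow> (u, v) \<in> E\<^sup>*"
proof (induction L arbitrary: u)
  case (Cons a L)
  then show ?case by (auto intro: converse_rtrancl_into_rtrancl)
qed simp

lemma parent_mem_directed_path:
  assumes unique_parent: "\<And>x y z. (x, z) \<in> E \<Longrightarrow> (y, z) \<in> E \<Longrightarrow> x = y"
  shows "directed_path E (w # L) \<Longrightarrow> L \<noteq> [] \<Longrightarrow> (u, last L) \<in> E \<Longrightarrow> u \<in> set (w # L)"
proof (induction L arbitrary: w)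
  case (Cons v L)
  then show ?case by (cases "L = []") (auto dest: unique_parent)
qed simp

lemma branch_point:
  assumes "(r, x) \<in> E\<^sup>*" "(r, y) \<in> E\<^sup>*"
  obtains w P Q where "directed_path E (w # P)" "directed_path E (w # Q)"
    "last (w # P) = x" "last (w # Q) = y" "P = [] \<or> Q = [] \<or> hd P \<noteq> hd Q"
proof -
  obtain X Y where X: "directed_path E (r # X)" "last (r # X) = x"
    and Y: "directed_path E (r # Y)" "last (r # Y) = y"
    using rtrancl_imp_directed_path assms by metis
  obtain c w P Q where split: "r # X = c @ w # P" "r # Y = c @ w # Q"
    and branch: "P = [] \<or> Q = [] \<or> hd P \<noteq> hd Q"
    using common_prefix_split[of "r # X" "r # Y"] by auto
  show thesis
  proof (rule that[OF _ _ _ _ branch])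
    show "directed_path E (w # P)" "last (w # P) = x"
      using X unfolding split(1) by (simp_all add: successively_append_iff)
    show "directed_path E (w # Q)" "last (w # Q) = y"
      using Y unfolding split(2) by (simp_all add: successively_append_iff)
  qed
qed

lemma is_path_monotone_path_join:
  assumes "directed_path E (w # P)" "directed_path E (w # Q)" "d \<noteq> 0"
    and down: "successively (\<lambda>x y. p y \<bullet> d < p x \<bullet> d) (w # P)"
    and up: "successively (\<lambda>x y. p x \<bullet> d < p y \<bullet> d) (w # Q)"
  shows "is_path E (rev (w # P) @ Q) (last (w # P)) (last (w # Q))"
    and "monotone_path p (rev (w # P) @ Q)"
proof -
  have join: "successively R (rev (w # P) @ Q)"
    if "successively (\<lambda>x y. R y x) (w # P)" "successively R (w # Q)" for R
  proof -
    have "successively R (rev (w # P))" using that(1) by (simp only: successively_rev)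
    then show ?thesis using that(2) last_rev[of "w # P"]
      by (cases Q) (auto simp: successively_append_iff simp del: rev.simps)
  qed
  have "successively (\<lambda>x y. (x, y) \<in> E \<or> (y, x) \<in> E) (rev (w # P) @ Q)"
    using assms(1,2) by (intro join) (auto elim: successively_mono)
  then show "is_path E (rev (w # P) @ Q) (last (w # P)) (last (w # Q))"
    unfolding is_path_def successively_conv_nth
    by (cases Q) (auto simp: hd_append hd_rev last_rev)
  have "successively (\<lambda>x y. p x \<bullet> d < p y \<bullet> d) (rev (w # P) @ Q)"
    using down up by (rule join)
  then show "monotone_path p (rev (w # P) @ Q)"
    unfolding monotone_path_def successively_conv_nth using assms(3) by blast
qed

definition subtree_edge :: "('v \<times> 'v) set \<Rightarrow> 'v \<Rightarrow> 'v \<Rightarrow> 'v \<Rightarrow> bool" where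
  "subtree_edge E c x y \<longleftrightarrow> (x, y) \<in> E \<and> ((c, x) \<in> E\<^sup>* \<or> y = c)"

lemma descendant_path_subtree_edges:
  "(c, v) \<in> E\<^sup>* \<Longrightarrow> directed_path E (v # L) \<Longrightarrow> successively (subtree_edge E c) (v # L)"
proof (induction L arbitrary: v)
  case (Cons a L)
  then have "(c, a) \<in> E\<^sup>*" by auto
  with Cons show ?case by (auto simp: subtree_edge_def)
qed simp

lemma directed_path_subtree_edges:
  "directed_path E (w # c # L) \<Longrightarrow> successively (subtree_edge E c) (w # c # L)"
  using descendant_path_subtree_edges[of c c E L] by (simp add: subtree_edge_def)

lemma rooted_tree_edge_in:
  "rooted_tree V E r \<Longrightarrow> (x, y) \<in> E \<Longrightarrow> x \<in> V \<and> y \<in> V"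
  unfolding rooted_tree_def by auto

lemma rooted_tree_unique_parent:
  assumes "rooted_tree V E r" "(x, z) \<in> E" "(y, z) \<in> E"
  shows "x = y"
proof -
  have "z \<in> V - {r}" using assms unfolding rooted_tree_def by auto
  then show ?thesis using assms unfolding rooted_tree_def by blast
qed

lemma rooted_tree_irrefl:
  assumes tree: "rooted_tree V E r"
  shows "(x, x) \<notin> E"
proof
  assume loop: "(x, x) \<in> E"
  have "v \<noteq> x" if "(r, v) \<in> E\<^sup>*" for v
    using that
  proof (induction rule: rtrancl_induct)
    case base
    show ?case using loop tree unfolding rooted_tree_def by auto
  next
    case (step y z)
    then show ?case using loop rooted_tree_unique_parent[OF tree] by blast
  qed
  moreover have "(r, x) \<in> E\<^sup>*"
    using loop tree unfolding rooted_tree_def by auto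
  ultimately show False by blast
qed

locale slope_disjoint_drawing =
  fixes V :: "'v set" and E :: "('v \<times> 'v) set" and r :: 'v and p :: "'v \<Rightarrow> complex"
    and a1 a2 :: "'v \<Rightarrow> real"
  assumes tree: "rooted_tree V E r" and inj: "inj_on p V"
    and sector_bounds: "u \<in> V \<Longrightarrow> 0 \<le> a1 u \<and> a1 u < a2 u \<and> a2 u \<le> pi"
    and subtree_slope: "u \<in> V \<Longrightarrow> subtree_edge E u x y \<Longrightarrow>
      a1 u < slope (p x) (p y) \<and> slope (p x) (p y) < a2 u"
    and sibling_sectors: "(u, v1) \<in> E \<Longrightarrow> (u, v2) \<in> E \<Longrightarrow> v1 \<noteq> v2 \<Longrightarrow>
      a2 v1 \<le> a1 v2 \<or> a2 v2 \<le> a1 v1"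
begin

lemma edge_endpoints_distinct: "(x, y) \<in> E \<Longrightarrow> p x \<noteq> p y"
  using inj rooted_tree_edge_in[OF tree] rooted_tree_irrefl[OF tree] by (metis inj_on_eq_iff)

lemma edge_projection:
  assumes "(x, y) \<in> E"
  shows "p y \<bullet> (\<i> * cis \<gamma>) - p x \<bullet> (\<i> * cis \<gamma>) = cmod (p y - p x) * sin (slope (p x) (p y) - \<gamma>)"
proof -
  have "p y \<bullet> (\<i> * cis \<gamma>) - p x \<bullet> (\<i> * cis \<gamma>) = (p y - p x) \<bullet> (\<i> * cis \<gamma>)"
    by (simp add: inner_diff_left)
  also have "\<dots> = cmod (p y - p x) * sin (slope (p x) (p y) - \<gamma>)"
    using edge_endpoints_distinct[OF assms] by (simp add: slope_eq_Arg2pi inner_i_cis)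
  finally show ?thesis .
qed

lemma subtree_edge_ascends:
  assumes "c \<in> V" "subtree_edge E c x y" "0 \<le> \<gamma>" "\<gamma> \<le> a1 c"
  shows "p x \<bullet> (\<i> * cis \<gamma>) < p y \<bullet> (\<i> * cis \<gamma>)"
proof -
  have edge: "(x, y) \<in> E" using assms(2) by (simp add: subtree_edge_def)
  have "0 < sin (slope (p x) (p y) - \<gamma>)"
    using subtree_slope[OF assms(1,2)] sector_bounds[OF assms(1)] assms(3,4)
    by (intro sin_gt_zero) auto
  then have "0 < cmod (p y - p x) * sin (slope (p x) (p y) - \<gamma>)"
    using edge_endpoints_distinct[OF edge] by simp
  then show ?thesis using edge_projection[OF edge, of \<gamma>] by linarith
qed

lemma subtree_edge_descends:
  assumes "c \<in> V" "subtree_edge E c x y" "a2 c \<le> \<gamma>" "\<gamma> \<le> pi"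
  shows "p y \<bullet> (\<i> * cis \<gamma>) < p x \<bullet> (\<i> * cis \<gamma>)"
proof -
  have edge: "(x, y) \<in> E" using assms(2) by (simp add: subtree_edge_def)
  have "0 < sin (\<gamma> - slope (p x) (p y))"
    using subtree_slope[OF assms(1,2)] sector_bounds[OF assms(1)] assms(3,4)
    by (intro sin_gt_zero) auto
  then have "sin (slope (p x) (p y) - \<gamma>) < 0"
    by (metis minus_diff_eq neg_less_0_iff_less sin_minus)
  then have "cmod (p y - p x) * sin (slope (p x) (p y) - \<gamma>) < 0"
    using edge_endpoints_distinct[OF edge] by (simp add: mult_pos_neg)
  then show ?thesis using edge_projection[OF edge, of \<gamma>] by linarith
qed

lemma edge_ascends: "(x, y) \<in> E \<Longrightarrow> Im (p x) < Im (p y)"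
  using subtree_edge_ascends[of y x y 0] rooted_tree_edge_in[OF tree] sector_bounds
  by (simp add: subtree_edge_def)

lemma reachable_ascends: "(x, y) \<in> E\<^sup>* \<Longrightarrow> Im (p x) \<le> Im (p y)"
  by (induction rule: rtrancl_induct) (auto dest: edge_ascends)

lemma branch_ascends:
  assumes "directed_path E (w # L)" "0 \<le> \<gamma>" "L \<noteq> [] \<Longrightarrow> \<gamma> \<le> a1 (hd L)"
  shows "successively (\<lambda>x y. p x \<bullet> (\<i> * cis \<gamma>) < p y \<bullet> (\<i> * cis \<gamma>)) (w # L)"
proof (cases L)
  case (Cons c L')
  then have "c \<in> V" using assms(1) rooted_tree_edge_in[OF tree] by auto
  have "successively (subtree_edge E c) (w # L)"
    using assms(1) Cons directed_path_subtree_edges by simp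
  then show ?thesis
    by (rule successively_mono) (use \<open>c \<in> V\<close> assms Cons in \<open>auto intro: subtree_edge_ascends\<close>)
qed simp

lemma branch_descends:
  assumes "directed_path E (w # L)" "\<gamma> \<le> pi" "L \<noteq> [] \<Longrightarrow> a2 (hd L) \<le> \<gamma>"
  shows "successively (\<lambda>x y. p y \<bullet> (\<i> * cis \<gamma>) < p x \<bullet> (\<i> * cis \<gamma>)) (w # L)"
proof (cases L)
  case (Cons c L')
  then have "c \<in> V" using assms(1) rooted_tree_edge_in[OF tree] by auto
  have "successively (subtree_edge E c) (w # L)"
    using assms(1) Cons directed_path_subtree_edges by simp
  then show ?thesis
    by (rule successively_mono) (use \<open>c \<in> V\<close> assms Cons in \<open>auto intro: subtree_edge_descends\<close>)
qed simp

lemma separating_direction: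
  assumes P: "directed_path E (w # P)" and Q: "directed_path E (w # Q)"
    and branch: "P = [] \<or> Q = [] \<or> hd P \<noteq> hd Q"
  obtains d where "d \<noteq> 0"
    "successively (\<lambda>x y. p y \<bullet> d < p x \<bullet> d) (w # P)"
    "successively (\<lambda>x y. p x \<bullet> d < p y \<bullet> d) (w # Q)"
proof -
  have separated: "\<exists>d. d \<noteq> 0 \<and> successively (\<lambda>x y. p y \<bullet> d < p x \<bullet> d) (w # P) \<and>
      successively (\<lambda>x y. p x \<bullet> d < p y \<bullet> d) (w # Q)"
    if "directed_path E (w # P)" "directed_path E (w # Q)" "0 \<le> \<gamma>" "\<gamma> \<le> pi"
      "P \<noteq> [] \<Longrightarrow> a2 (hd P) \<le> \<gamma>" "Q \<noteq> [] \<Longrightarrow> \<gamma> \<le> a1 (hd Q)" for P Q \<gamma>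
  proof (intro exI conjI)
    show "\<i> * cis \<gamma> \<noteq> 0" by simp
    show "successively (\<lambda>x y. p y \<bullet> (\<i> * cis \<gamma>) < p x \<bullet> (\<i> * cis \<gamma>)) (w # P)"
      using that by (intro branch_descends) auto
    show "successively (\<lambda>x y. p x \<bullet> (\<i> * cis \<gamma>) < p y \<bullet> (\<i> * cis \<gamma>)) (w # Q)"
      using that by (intro branch_ascends) auto
  qed
  have child: "(w, hd L) \<in> E" "0 \<le> a1 (hd L)" "a1 (hd L) < a2 (hd L)" "a2 (hd L) \<le> pi"
    if "directed_path E (w # L)" "L \<noteq> []" for L
    using that sector_bounds rooted_tree_edge_in[OF tree] by (cases L; force)+
  consider "P = []" | "Q = []"
    | "P \<noteq> []" "Q \<noteq> []" "a2 (hd P) \<le> a1 (hd Q)"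
    | "P \<noteq> []" "Q \<noteq> []" "a2 (hd Q) \<le> a1 (hd P)"
    using branch sibling_sectors child(1)[OF P] child(1)[OF Q] by blast
  then have "\<exists>d. d \<noteq> 0 \<and> successively (\<lambda>x y. p y \<bullet> d < p x \<bullet> d) (w # P) \<and>
      successively (\<lambda>x y. p x \<bullet> d < p y \<bullet> d) (w # Q)"
  proof cases
    case 1
    then show ?thesis using separated[OF P Q, of 0] child(2)[OF Q] by simp
  next
    case 2
    then show ?thesis using separated[OF P Q, of pi] child(4)[OF P] by simp
  next
    case 3
    then show ?thesis using separated[OF P Q, of "a2 (hd P)"] child(2-4)[OF P] by simp
  next
    case 4
    then obtain d where "d \<noteq> 0" "successively (\<lambda>x y. p y \<bullet> d < p x \<bullet> d) (w # Q)"
      "successively (\<lambda>x y. p x \<bullet> d < p y \<bullet> d) (w # P)"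
      using separated[OF Q P, of "a2 (hd Q)"] child(2-4)[OF Q] by auto
    then show ?thesis by (intro exI[of _ "- d"]) simp
  qed
  then show thesis using that by blast
qed

lemma drawing_is_monotone: "monotone_drawing V E p"
  unfolding monotone_drawing_def
proof (intro ballI)
  fix x y assume "x \<in> V" "y \<in> V"
  then obtain w P Q where P: "directed_path E (w # P)" "last (w # P) = x"
    and Q: "directed_path E (w # Q)" "last (w # Q) = y"
    and branch: "P = [] \<or> Q = [] \<or> hd P \<noteq> hd Q"
    using branch_point[of r x E y] tree unfolding rooted_tree_def by metis
  obtain d where "d \<noteq> 0" "successively (\<lambda>x y. p y \<bullet> d < p x \<bullet> d) (w # P)"
    "successively (\<lambda>x y. p x \<bullet> d < p y \<bullet> d) (w # Q)"
    using separating_direction[OF P(1) Q(1) branch] by blast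
  from is_path_monotone_path_join[OF P(1) Q(1) this] P(2) Q(2)
  show "\<exists>ps. is_path E ps x y \<and> monotone_path p ps" by metis
qed

lemma parent_on_branch:
  assumes "directed_path E (w # L)" "L \<noteq> []" "(u, last L) \<in> E"
  shows "u \<in> set (w # L)"
proof (rule parent_mem_directed_path[OF _ assms])
  show "x = y" if "(x, z) \<in> E" "(y, z) \<in> E" for x y z
    using rooted_tree_unique_parent[OF tree that] .
qed

lemma nested_edges_meet_properly:
  assumes "(a, b) \<in> E" "(c, d) \<in> E" "(b, c) \<in> E\<^sup>*"
  shows "closed_segment (p a) (p b) \<inter> closed_segment (p c) (p d) \<subseteq> {p a, p b} \<inter> {p c, p d}"
proof
  fix q assume q: "q \<in> closed_segment (p a) (p b) \<inter> closed_segment (p c) (p d)"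
  have "Im (p a) < Im (p b)" "Im (p b) \<le> Im (p c)" "Im (p c) < Im (p d)"
    using assms edge_ascends reachable_ascends by blast+
  moreover have "q \<in> closed_segment (p b) (p a)" "q \<in> closed_segment (p c) (p d)"
    using q by (auto simp: closed_segment_commute)
  ultimately have "q = p b \<and> q = p c"
    by (intro closed_segments_separated_by_hyperplane[where d = \<i> and t = "Im (p b)"]) simp_all
  then show "q \<in> {p a, p b} \<inter> {p c, p d}" by blast
qed

lemma diverging_edges_meet_properly:
  assumes P: "directed_path E (w # P)" "P \<noteq> []" and Q: "directed_path E (w # Q)" "Q \<noteq> []"
    and "hd P \<noteq> hd Q" and "(a, last P) \<in> E" "(c, last Q) \<in> E"
  shows "closed_segment (p a) (p (last P)) \<inter> closed_segment (p c) (p (last Q))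
    \<subseteq> {p a, p (last P)} \<inter> {p c, p (last Q)}"
proof
  fix q assume q: "q \<in> closed_segment (p a) (p (last P)) \<inter> closed_segment (p c) (p (last Q))"
  obtain d where down: "successively (\<lambda>x y. p y \<bullet> d < p x \<bullet> d) (w # P)"
    and up: "successively (\<lambda>x y. p x \<bullet> d < p y \<bullet> d) (w # Q)"
    using separating_direction[OF P(1) Q(1)] assms(5) by blast
  have below: "p v \<bullet> d < p w \<bullet> d" if "v \<in> set P" for v
    by (rule successively_transp_hd[OF down _ that]) (auto intro: transpI)
  have above: "p w \<bullet> d < p v \<bullet> d" if "v \<in> set Q" for v
    by (rule successively_transp_hd[OF up _ that]) (auto intro: transpI)
  have "a \<in> set (w # P)"
    using parent_on_branch[OF P assms(6)] .
  then have "p a \<bullet> d \<le> p w \<bullet> d" using below[of a] by fastforce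
  moreover have "p (last P) \<bullet> d < p w \<bullet> d" using below P(2) by simp
  moreover have "c \<in> set (w # Q)"
    using parent_on_branch[OF Q assms(7)] .
  then have "p w \<bullet> d \<le> p c \<bullet> d" using above[of c] by fastforce
  moreover have "p w \<bullet> d < p (last Q) \<bullet> d" using above Q(2) by simp
  moreover have "q \<in> closed_segment (p a) (p (last P))" "q \<in> closed_segment (p c) (p (last Q))"
    using q by simp_all
  ultimately have "q = p a \<and> q = p c"
    by (rule closed_segments_separated_by_hyperplane)
  then show "q \<in> {p a, p (last P)} \<inter> {p c, p (last Q)}" by blast
qed

lemma drawing_is_planar: "planar_drawing E p"
  unfolding planar_drawing_def
proof (intro allI impI, elim conjE)
  fix a b c d assume ab: "(a, b) \<in> E" and cd: "(c, d) \<in> E" and "(a, b) \<noteq> (c, d)"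
  then have "b \<noteq> d" using rooted_tree_unique_parent[OF tree] by blast
  have "(r, b) \<in> E\<^sup>*" "(r, d) \<in> E\<^sup>*"
    using ab cd tree unfolding rooted_tree_def by blast+
  then obtain w P Q where P: "directed_path E (w # P)" "last (w # P) = b"
    and Q: "directed_path E (w # Q)" "last (w # Q) = d"
    and branch: "P = [] \<or> Q = [] \<or> hd P \<noteq> hd Q"
    by (rule branch_point)
  consider "P = []" | "Q = []" | "P \<noteq> []" "Q \<noteq> []" "hd P \<noteq> hd Q"
    using branch by blast
  then show "closed_segment (p a) (p b) \<inter> closed_segment (p c) (p d) \<subseteq> {p a, p b} \<inter> {p c, p d}"
  proof cases
    case 1
    with P Q \<open>b \<noteq> d\<close> have "w = b" "Q \<noteq> []" by auto
    with Q cd have "c \<in> set (w # Q)" using parent_on_branch[OF Q(1)] by simp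
    then have "(b, c) \<in> E\<^sup>*" using directed_path_reachable[OF Q(1)] \<open>w = b\<close> by simp
    then show ?thesis by (rule nested_edges_meet_properly[OF ab cd])
  next
    case 2
    with P Q \<open>b \<noteq> d\<close> have "w = d" "P \<noteq> []" by auto
    with P ab have "a \<in> set (w # P)" using parent_on_branch[OF P(1)] by simp
    then have "(d, a) \<in> E\<^sup>*" using directed_path_reachable[OF P(1)] \<open>w = d\<close> by simp
    then show ?thesis using nested_edges_meet_properly[OF cd ab] by blast
  next
    case 3
    with P Q ab cd show ?thesis using diverging_edges_meet_properly[OF P(1) _ Q(1)] by simp
  qed
qed

end

lemma nonstrictly_slope_disjoint_sectors:
  assumes "rooted_tree V E r" "straight_line_drawing V p" "nonstrictly_slope_disjoint V E r p"
  obtains a1 a2 where "slope_disjoint_drawing V E r p a1 a2"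
proof -
  obtain a1 a2 where
    bounds: "\<forall>u\<in>V. 0 \<le> a1 u \<and> a1 u < a2 u \<and> a2 u \<le> pi" and
    slopes: "\<forall>u\<in>V. \<forall>x y. (x, y) \<in> E \<and> ((u, x) \<in> E\<^sup>* \<or> y = u) \<longrightarrow>
      a1 u < slope (p x) (p y) \<and> slope (p x) (p y) < a2 u" and
    siblings: "\<forall>u v1 v2. (u, v1) \<in> E \<and> (u, v2) \<in> E \<and> v1 \<noteq> v2 \<longrightarrow>
      (a1 v1 < a2 v1 \<and> a2 v1 \<le> a1 v2 \<and> a1 v2 < a2 v2) \<or>
      (a1 v2 < a2 v2 \<and> a2 v2 \<le> a1 v1 \<and> a1 v1 < a2 v1)"
    using assms(3) unfolding nonstrictly_slope_disjoint_def by (elim exE conjE) (rule that; assumption)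
  have "slope_disjoint_drawing V E r p a1 a2"
  proof
    show "rooted_tree V E r" "inj_on p V"
      using assms(1,2) unfolding straight_line_drawing_def .
    show "0 \<le> a1 u \<and> a1 u < a2 u \<and> a2 u \<le> pi" if "u \<in> V" for u
      using bounds that by blast
    show "a1 u < slope (p x) (p y) \<and> slope (p x) (p y) < a2 u"
      if "u \<in> V" "subtree_edge E u x y" for u x y
      using slopes that unfolding subtree_edge_def by blast
    show "a2 v1 \<le> a1 v2 \<or> a2 v2 \<le> a1 v1" if "(u, v1) \<in> E" "(u, v2) \<in> E" "v1 \<noteq> v2" for u v1 v2
      using siblings that by blast
  qed
  then show thesis by (rule that)
qed

theorem theorem3:
  fixes V :: "'v set" and E :: "('v \<times> 'v) set" and r :: 'v and p :: "'v \<Rightarrow> complex"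
  assumes "rooted_tree V E r"
    and "straight_line_drawing V p"
    and "nonstrictly_slope_disjoint V E r p"
  shows "monotone_drawing V E p \<and> planar_drawing E p"
proof -
  obtain a1 a2 where "slope_disjoint_drawing V E r p a1 a2"
    using nonstrictly_slope_disjoint_sectors[OF assms] .
  then interpret slope_disjoint_drawing V E r p a1 a2 .
  show ?thesis using drawing_is_monotone drawing_is_planar by blast
qed

end
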